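(* Let $\omega_0>0$, $\gamma>0$, and consider the control system $\dot X(t)=-i\big(\omega_0C_z+u_xB_x+u_yB_y+u_zB_z\big)X(t)$, $X(0)=I_4$, with admissible controls $u_x^2+u_y^2+u_z^2\le\gamma^2$. Let the target be a SWAP-equivalent operator $$X_f=\begin{pmatrix}0&e^{i\varphi}\\-e^{-i\varphi}&0\end{pmatrix},\qquad\varphi\in\mathbb{R},$$ and consider an extremal trajectory on $[0,t_f]$ steering $X$ from $I_4$ to $X(t_f)=\mathrm{diag}(Y_1,Y_2)$ with $Y_1,Y_2\in\{X_f,-X_f\}$. Then no singular arc of this extremal trajectory can be at the beginning of the trajectory (i.e. contain an interval $[0,\epsilon)$, $\epsilon>0$) or at its end (i.e. contain an interval $(t_f-\epsilon,t_f]$).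
   Context: $S_k=\frac12\sigma_k$ ($k=x,y,z$) with $\sigma_k$ the Pauli matrices; $B_k=\mathrm{diag}(S_k,S_k)$ and $C_k=\mathrm{diag}(S_k,-S_k)$ are $4\times4$ block-diagonal matrices, so $X(t)=\mathrm{diag}(X_1(t),X_2(t))$ with $X_1,X_2\in SU(2)$. Costate: a nonzero matrix $M$ in the real Lie algebra $\mathfrak l$ spanned by $iB_k,iC_k$ ($k=x,y,z$). Given $M$ and a trajectory $X$, define $b_k(t)=i\,\mathrm{Tr}(M X(t)^\dagger B_k X(t))$ and $c_k(t)=i\,\mathrm{Tr}(M X(t)^\dagger C_k X(t))$. The Pontryagin Hamiltonian is $H(M,X,v)=\omega_0c_z+\sum_{k}v_kb_k$. An extremal is an admissible control $u$ with trajectory $X$ for which there exist $M\neq0$ in $\mathfrak l$ and a constant $\lambda$ such that for a.e. $t$, $H(M,X(t),u(t))\ge H(M,X(t),v)$ for all $v$ with $v_x^2+v_y^2+v_z^2\le\gamma^2$, and $H(M,X(t),u(t))=\lambda$. A singular arc is an interval of positive length on which $b_x\equiv b_y\equiv b_z\equiv0$. *)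

theory Defs
  imports "HOL-Analysis.Analysis" "HOL-Library.Numeral_Type"
begin

type_synonym cmat2 = "complex^2^2"
type_synonym cmat4 = "complex^4^4"

definition csc :: "complex \<Rightarrow> complex^'n^'m \<Rightarrow> complex^'n^'m" where
  "csc c A = (\<chi> i j. c * A $ i $ j)"

definition ctrans :: "complex^'n^'m \<Rightarrow> complex^'m^'n" where
  "ctrans A = (\<chi> i j. cnj (A $ j $ i))"

definition mat2 :: "complex \<Rightarrow> complex \<Rightarrow> complex \<Rightarrow> complex \<Rightarrow> cmat2" where
  "mat2 a b c d = (\<chi> i j. if i = 0 then (if j = 0 then a else b) else (if j = 0 then c else d))"

text \<open>S_k = sigma_k / 2.\<close>
definition Sx :: cmat2 where "Sx = mat2 0 (1/2) (1/2) 0"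
definition Sy :: cmat2 where "Sy = mat2 0 (-\<i>/2) (\<i>/2) 0"
definition Sz :: cmat2 where "Sz = mat2 (1/2) 0 0 (-1/2)"

definition idx42 :: "4 \<Rightarrow> 2" where
  "idx42 i = (if i = 0 \<or> i = 2 then 0 else 1)"

definition blockdiag :: "cmat2 \<Rightarrow> cmat2 \<Rightarrow> cmat4" where
  "blockdiag A B = (\<chi> i j.
     if (i = 0 \<or> i = 1) \<and> (j = 0 \<or> j = 1) then A $ idx42 i $ idx42 j
     else if (i = 2 \<or> i = 3) \<and> (j = 2 \<or> j = 3) then B $ idx42 i $ idx42 j
     else 0)"

definition Bx :: cmat4 where "Bx = blockdiag Sx Sx"
definition By :: cmat4 where "By = blockdiag Sy Sy"
definition Bz :: cmat4 where "Bz = blockdiag Sz Sz"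
definition Cx :: cmat4 where "Cx = blockdiag Sx (-Sx)"
definition Cy :: cmat4 where "Cy = blockdiag Sy (-Sy)"
definition Cz :: cmat4 where "Cz = blockdiag Sz (-Sz)"

definition lie_l :: "cmat4 set" where
  "lie_l = {csc \<i> (a1 *\<^sub>R Bx + a2 *\<^sub>R By + a3 *\<^sub>R Bz + c1 *\<^sub>R Cx + c2 *\<^sub>R Cy + c3 *\<^sub>R Cz)
            | a1 a2 a3 c1 c2 c3 :: real. True}"

text \<open>The quantity i Tr(M X^dagger K X); it is real for M in l, X unitary, K Hermitian,
  so we take its real part.\<close>
definition pcoef :: "cmat4 \<Rightarrow> cmat4 \<Rightarrow> cmat4 \<Rightarrow> real" where
  "pcoef M X K = Re (\<i> * trace (M ** ctrans X ** K ** X))"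

definition pmp_H :: "real \<Rightarrow> cmat4 \<Rightarrow> cmat4 \<Rightarrow> real \<Rightarrow> real \<Rightarrow> real \<Rightarrow> real" where
  "pmp_H \<omega>0 M X vx vy vz =
     \<omega>0 * pcoef M X Cz + vx * pcoef M X Bx + vy * pcoef M X By + vz * pcoef M X Bz"

definition Hsys :: "real \<Rightarrow> real \<Rightarrow> real \<Rightarrow> real \<Rightarrow> cmat4" where
  "Hsys \<omega>0 ux uy uz = \<omega>0 *\<^sub>R Cz + ux *\<^sub>R Bx + uy *\<^sub>R By + uz *\<^sub>R Bz"

definition admissible :: "real \<Rightarrow> real \<Rightarrow> (real \<Rightarrow> real) \<Rightarrow> (real \<Rightarrow> real) \<Rightarrow> (real \<Rightarrow> real) \<Rightarrow> bool" where
  "admissible \<gamma> tf ux uy uz \<longleftrightarrow>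
     ux \<in> borel_measurable (lebesgue_on {0..tf}) \<and>
     uy \<in> borel_measurable (lebesgue_on {0..tf}) \<and>
     uz \<in> borel_measurable (lebesgue_on {0..tf}) \<and>
     (\<forall>t\<in>{0..tf}. (ux t)\<^sup>2 + (uy t)\<^sup>2 + (uz t)\<^sup>2 \<le> \<gamma>\<^sup>2)"

text \<open>X is the (Caratheodory) solution of dX/dt = -i H(t) X, X(0) = I on [0,tf],
  i.e. X(t) = I + integral_0^t (-i H(s) X(s)) ds.\<close>
definition trajectory :: "real \<Rightarrow> real \<Rightarrow> (real \<Rightarrow> real) \<Rightarrow> (real \<Rightarrow> real) \<Rightarrow> (real \<Rightarrow> real)
                            \<Rightarrow> (real \<Rightarrow> cmat4) \<Rightarrow> bool" where
  "trajectory \<omega>0 tf ux uy uz X \<longleftrightarrow>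
     (\<forall>t\<in>{0..tf}. ((\<lambda>s. csc (-\<i>) (Hsys \<omega>0 (ux s) (uy s) (uz s) ** X s)) has_integral (X t - mat 1)) {0..t})"

definition extremal :: "real \<Rightarrow> real \<Rightarrow> real \<Rightarrow> (real \<Rightarrow> real) \<Rightarrow> (real \<Rightarrow> real) \<Rightarrow> (real \<Rightarrow> real)
                          \<Rightarrow> (real \<Rightarrow> cmat4) \<Rightarrow> cmat4 \<Rightarrow> bool" where
  "extremal \<omega>0 \<gamma> tf ux uy uz X M \<longleftrightarrow>
     M \<in> lie_l \<and> M \<noteq> 0 \<and>
     (\<exists>lam::real. AE t in lebesgue. t \<in> {0..tf} \<longrightarrow>
        ((\<forall>vx vy vz. vx\<^sup>2 + vy\<^sup>2 + vz\<^sup>2 \<le> \<gamma>\<^sup>2 \<longrightarrow>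
            pmp_H \<omega>0 M (X t) (ux t) (uy t) (uz t) \<ge> pmp_H \<omega>0 M (X t) vx vy vz) \<and>
         pmp_H \<omega>0 M (X t) (ux t) (uy t) (uz t) = lam))"

definition Xf :: "real \<Rightarrow> cmat2" where
  "Xf \<phi> = mat2 0 (cis \<phi>) (- cis (-\<phi>)) 0"

end

(* Write M = i (a . B + c . C). At X = I the coefficients b_k equal -a_k, and at the
   SWAP-equivalent endpoint they are a rotated copy of a, so a singular arc touching either end
   forces a = 0. The Hamiltonian equals omega0 c_z wherever b vanishes, and c_z is -c_3 at t = 0
   but c_3 at t = tf, hence c_3 = 0. Finally b_x and b_y vanish identically near the endpoint, so
   their first-order variation along the trajectory must vanish; for a = 0 this variation does not
   depend on the control and is omega0 times a rotation of (c_1, c_2). Thus M = 0, contradicting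
   nontriviality of the costate. As the controls are only measurable, the variation is controlled
   by integral estimates (bilinear_form_rate_eq_0) instead of by differentiation. *)

theory Submission
  imports Defs
begin

lemma UNIV_2_zero_based: "(UNIV :: 2 set) = {0, 1}"
proof -
  have "(2::2) = 0" by simp
  then show ?thesis using UNIV_2 by (metis insert_commute)
qed

lemma UNIV_4_zero_based: "(UNIV :: 4 set) = {0, 1, 2, 3}"
proof -
  have "(4::4) = 0" by simp
  then show ?thesis using UNIV_4 by (auto simp: insert_commute)
qed

lemma sum_UNIV_2: "sum f (UNIV :: 2 set) = f 0 + f 1"
  unfolding UNIV_2_zero_based by simp

lemma sum_UNIV_4: "sum f (UNIV :: 4 set) = f 0 + f 1 + f 2 + f 3"
  unfolding UNIV_4_zero_based by (simp add: ac_simps)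

lemma all_2_zero_based: "(\<forall>i::2. P i) \<longleftrightarrow> P 0 \<and> P 1"
  by (metis UNIV_2_zero_based UNIV_I insertE singletonD)

lemma all_4_zero_based: "(\<forall>i::4. P i) \<longleftrightarrow> P 0 \<and> P 1 \<and> P 2 \<and> P 3"
  by (metis UNIV_4_zero_based UNIV_I insertE singletonD)

section \<open>Complex matrices\<close>

lemma csc_mult_left: "csc c A ** B = csc c (A ** B)"
  by (simp add: vec_eq_iff csc_def matrix_matrix_mult_def sum_distrib_left mult.assoc)

lemma csc_mult_right: "A ** csc c B = csc c (A ** B)"
  by (simp add: vec_eq_iff csc_def matrix_matrix_mult_def sum_distrib_left mult.left_commute)

lemma ctrans_csc: "ctrans (csc c A) = csc (cnj c) (ctrans A)"
  by (simp add: vec_eq_iff ctrans_def csc_def)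

lemma ctrans_add: "ctrans (A + B) = ctrans A + ctrans B"
  by (simp add: vec_eq_iff ctrans_def)

lemma ctrans_scaleR: "ctrans (r *\<^sub>R A) = r *\<^sub>R ctrans A"
  by (simp add: vec_eq_iff ctrans_def)

lemma trace_scaleR: "trace (r *\<^sub>R (A :: complex^'n^'n)) = r *\<^sub>R trace A"
  by (simp add: trace_def scaleR_sum_right)

lemma matrix_add_rdistrib: "(B + C) ** A = B ** A + C ** A"
  by (simp add: matrix_matrix_mult_def vec_eq_iff algebra_simps sum.distrib)

lemma matrix_diff_ldistrib: "(A :: complex^'n^'m) ** (B - C) = A ** B - A ** C"
  by (simp add: matrix_matrix_mult_def vec_eq_iff right_diff_distrib sum_subtractf)

lemma bounded_bilinear_matrix_mult: "bounded_bilinear ((**) :: cmat4 \<Rightarrow> cmat4 \<Rightarrow> cmat4)"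
  unfolding bilinear_conv_bounded_bilinear[symmetric] bilinear_def
  by (auto intro!: linearI simp: matrix_add_ldistrib matrix_add_rdistrib
      scalar_matrix_assoc[symmetric] matrix_scalar_ac)

lemma bounded_linear_csc: "bounded_linear (csc c :: cmat4 \<Rightarrow> cmat4)"
  unfolding linear_conv_bounded_linear[symmetric]
  by (auto intro!: linearI simp: csc_def vec_eq_iff algebra_simps scaleR_conv_of_real)

lemma mat2_mult: "mat2 a b c d ** mat2 e f g h = mat2 (a*e+b*g) (a*f+b*h) (c*e+d*g) (c*f+d*h)"
  by (simp add: vec_eq_iff mat2_def matrix_matrix_mult_def sum_UNIV_2 all_2_zero_based)

lemma mat2_ctrans: "ctrans (mat2 a b c d) = mat2 (cnj a) (cnj c) (cnj b) (cnj d)"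
  by (simp add: vec_eq_iff mat2_def ctrans_def all_2_zero_based)

lemma mat2_trace: "trace (mat2 a b c d) = a + d"
  by (simp add: mat2_def trace_def sum_UNIV_2)

lemma mat2_csc: "csc z (mat2 a b c d) = mat2 (z*a) (z*b) (z*c) (z*d)"
  by (simp add: vec_eq_iff mat2_def csc_def all_2_zero_based)

lemma mat2_add: "mat2 a b c d + mat2 e f g h = mat2 (a+e) (b+f) (c+g) (d+h)"
  by (simp add: vec_eq_iff mat2_def all_2_zero_based)

lemma mat2_uminus: "- mat2 a b c d = mat2 (-a) (-b) (-c) (-d)"
  by (simp add: vec_eq_iff mat2_def all_2_zero_based)

lemma mat2_scaleR: "r *\<^sub>R mat2 a b c d = mat2 (r *\<^sub>R a) (r *\<^sub>R b) (r *\<^sub>R c) (r *\<^sub>R d)"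
  by (simp add: vec_eq_iff mat2_def all_2_zero_based)

lemma mat2_one: "(mat 1 :: cmat2) = mat2 1 0 0 1"
  by (simp add: vec_eq_iff mat2_def all_2_zero_based mat_def)

lemma blockdiag_mult: "blockdiag A B ** blockdiag C D = blockdiag (A ** C) (B ** D)"
  by (simp add: vec_eq_iff all_4_zero_based matrix_matrix_mult_def blockdiag_def sum_UNIV_4
      idx42_def sum_UNIV_2)

lemma blockdiag_ctrans: "ctrans (blockdiag A B) = blockdiag (ctrans A) (ctrans B)"
  by (simp add: vec_eq_iff all_4_zero_based ctrans_def blockdiag_def idx42_def)

lemma blockdiag_trace: "trace (blockdiag A B) = trace A + trace B"
  by (simp add: trace_def blockdiag_def sum_UNIV_4 idx42_def sum_UNIV_2)

lemma blockdiag_csc: "csc c (blockdiag A B) = blockdiag (csc c A) (csc c B)"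
  by (simp add: vec_eq_iff all_4_zero_based csc_def blockdiag_def idx42_def)

lemma blockdiag_add: "blockdiag A B + blockdiag C D = blockdiag (A + C) (B + D)"
  by (simp add: vec_eq_iff all_4_zero_based blockdiag_def idx42_def)

lemma blockdiag_uminus: "- blockdiag A B = blockdiag (-A) (-B)"
  by (simp add: vec_eq_iff all_4_zero_based blockdiag_def idx42_def)

lemma blockdiag_scaleR: "r *\<^sub>R blockdiag A B = blockdiag (r *\<^sub>R A) (r *\<^sub>R B)"
  by (simp add: vec_eq_iff all_4_zero_based blockdiag_def idx42_def)

lemma blockdiag_one: "(mat 1 :: cmat4) = blockdiag (mat 1) (mat 1)"
  by (simp add: vec_eq_iff all_4_zero_based blockdiag_def idx42_def mat_def)

lemmas spin_matrix_simps = Bx_def By_def Bz_def Cx_def Cy_def Cz_def Sx_def Sy_def Sz_def Xf_def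
  Hsys_def blockdiag_mult blockdiag_ctrans blockdiag_trace blockdiag_csc blockdiag_add
  blockdiag_uminus blockdiag_scaleR blockdiag_one mat2_mult mat2_ctrans mat2_trace mat2_csc
  mat2_add mat2_uminus mat2_scaleR mat2_one csc_mult_left csc_mult_right ctrans_csc
  scalar_matrix_assoc[symmetric] matrix_scalar_ac

lemma rotation_eq_0_imp:
  fixes c s x y :: real
  assumes "c\<^sup>2 + s\<^sup>2 = 1" "c * x - s * y = 0" "s * x + c * y = 0"
  shows "x = 0" "y = 0"
proof -
  have "x = x * (c\<^sup>2 + s\<^sup>2)" using assms(1) by simp
  also have "\<dots> = c * (c * x - s * y) + s * (s * x + c * y)"
    by (simp add: algebra_simps power2_eq_square)
  finally show "x = 0" using assms(2,3) by simp
  have "y = y * (c\<^sup>2 + s\<^sup>2)" using assms(1) by simp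
  also have "\<dots> = c * (s * x + c * y) - s * (c * x - s * y)"
    by (simp add: algebra_simps power2_eq_square)
  finally show "y = 0" using assms(2,3) by simp
qed

lemma abs_le_if_sum_squares_le:
  fixes x y z \<gamma> :: real
  assumes "x\<^sup>2 + y\<^sup>2 + z\<^sup>2 \<le> \<gamma>\<^sup>2" and "0 \<le> \<gamma>"
  shows "\<bar>x\<bar> \<le> \<gamma>" "\<bar>y\<bar> \<le> \<gamma>" "\<bar>z\<bar> \<le> \<gamma>"
proof -
  have "x\<^sup>2 \<le> \<gamma>\<^sup>2" "y\<^sup>2 \<le> \<gamma>\<^sup>2" "z\<^sup>2 \<le> \<gamma>\<^sup>2"
    using assms(1) by (smt (verit) zero_le_power2)+
  then show "\<bar>x\<bar> \<le> \<gamma>" "\<bar>y\<bar> \<le> \<gamma>" "\<bar>z\<bar> \<le> \<gamma>"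
    using assms(2) by (simp_all add: abs_le_square_iff[symmetric])
qed

lemma mult_le_abs_bound:
  fixes v b \<gamma> :: real
  assumes "\<bar>v\<bar> \<le> \<gamma>"
  shows "v * b \<le> \<gamma> * \<bar>b\<bar>"
proof -
  have "v * b \<le> \<bar>v\<bar> * \<bar>b\<bar>" by (simp flip: abs_mult)
  also have "\<dots> \<le> \<gamma> * \<bar>b\<bar>" using assms by (rule mult_right_mono) simp
  finally show ?thesis .
qed

lemma eq_0_if_abs_le_linear:
  fixes L C \<delta> :: real
  assumes "\<delta> > 0" and bound: "\<And>\<tau>. 0 < \<tau> \<Longrightarrow> \<tau> < \<delta> \<Longrightarrow> \<bar>L\<bar> \<le> C * \<tau>"
  shows "L = 0"
proof -
  have "\<bar>L\<bar> \<le> 0"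
  proof (rule tendsto_lowerbound)
    show "((\<lambda>\<tau>. C * \<tau>) \<longlongrightarrow> 0) (at_right 0)"
      by (auto intro!: tendsto_eq_intros)
    show "\<forall>\<^sub>F \<tau> in at_right 0. \<bar>L\<bar> \<le> C * \<tau>"
      using eventually_at_right_real[OF assms(1)] by eventually_elim (auto intro: bound)
  qed simp
  then show ?thesis by simp
qed

lemma has_integral_norm_le_length:
  fixes f :: "real \<Rightarrow> 'a::real_normed_vector"
  assumes "(f has_integral i) {a..a + \<tau>}" and "\<tau> \<ge> 0"
    and "\<And>s. s \<in> {a..a + \<tau>} \<Longrightarrow> norm (f s) \<le> B"
  shows "norm i \<le> B * \<tau>"
proof -
  have "0 \<le> B"
    using assms(2) assms(3)[of a] norm_ge_zero[of "f a"]
    by (meson atLeastAtMost_iff le_add_same_cancel1 order.refl order_trans)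
  then have "norm i \<le> B * Henstock_Kurzweil_Integration.content (cbox a (a + \<tau>))"
    using assms by (intro has_integral_bound[where f = f]) (auto simp: cbox_interval)
  then show ?thesis using assms(2) by (simp add: cbox_interval content_real)
qed

text \<open>\<open>Y\<close> and \<open>Y + \<sigma> e \<tau>\<close> are the values at the two ends of \<open>{lo \<tau>..lo \<tau> + \<tau>}\<close>;
  \<open>\<sigma> = 1\<close> covers increments to the right of the base point, \<open>\<sigma> = -1\<close> to the left.\<close>
lemma bilinear_form_rate_eq_0:
  fixes h :: "'a::real_normed_vector \<Rightarrow> 'a \<Rightarrow> real" and F A e :: "real \<Rightarrow> 'a"
    and lo :: "real \<Rightarrow> real"
  assumes h: "bounded_bilinear h" and "\<delta> > 0" and \<sigma>: "\<sigma> = 1 \<or> \<sigma> = -1"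
    and integral: "\<And>\<tau>. 0 < \<tau> \<Longrightarrow> \<tau> < \<delta> \<Longrightarrow> (F has_integral e \<tau>) {lo \<tau>..lo \<tau> + \<tau>}"
    and vanish: "\<And>\<tau>. 0 < \<tau> \<Longrightarrow> \<tau> < \<delta> \<Longrightarrow> h (Y + \<sigma> *\<^sub>R e \<tau>) (Y + \<sigma> *\<^sub>R e \<tau>) = 0"
    and "h Y Y = 0"
    and F_bound: "\<And>\<tau> s. 0 < \<tau> \<Longrightarrow> \<tau> < \<delta> \<Longrightarrow> s \<in> {lo \<tau>..lo \<tau> + \<tau>} \<Longrightarrow> norm (F s) \<le> K"
    and F_approx: "\<And>\<tau> s. 0 < \<tau> \<Longrightarrow> \<tau> < \<delta> \<Longrightarrow> s \<in> {lo \<tau>..lo \<tau> + \<tau>} \<Longrightarrow>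
                     norm (F s - A s) \<le> K' * \<tau>"
    and rate: "\<And>s. h (A s) Y + h Y (A s) = L"
  shows "L = 0"
proof -
  obtain Kh where Kh: "Kh > 0" "\<And>a b. norm (h a b) \<le> norm a * norm b * Kh"
    using bounded_bilinear.pos_bounded[OF h] by blast
  define \<Psi> where "\<Psi> E = h E Y + h Y E" for E
  have \<Psi>: "bounded_linear \<Psi>"
    unfolding \<Psi>_def by (intro bounded_linear_add bounded_bilinear.bounded_linear_left[OF h]
        bounded_bilinear.bounded_linear_right[OF h])
  have \<Psi>_le: "\<bar>\<Psi> E\<bar> \<le> 2 * norm Y * Kh * norm E" for E
    using Kh(2)[of E Y] Kh(2)[of Y E] abs_triangle_ineq[of "h E Y" "h Y E"]
    unfolding \<Psi>_def real_norm_def by (simp add: mult_ac)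
  have "0 \<le> K"
    using F_bound[of "\<delta>/2" "lo (\<delta>/2)"] \<open>\<delta> > 0\<close> by (simp add: order_trans[OF norm_ge_zero])
  define C where "C = 2 * norm Y * Kh * K' + Kh * K * K"
  show ?thesis
  proof (rule eq_0_if_abs_le_linear[OF \<open>\<delta> > 0\<close>])
    fix \<tau> assume \<tau>: "0 < \<tau>" "\<tau> < \<delta>"
    have "((\<lambda>s. \<Psi> (F s) - L) has_integral (\<Psi> (e \<tau>) - \<tau> * L)) {lo \<tau>..lo \<tau> + \<tau>}"
      using has_integral_diff[OF has_integral_linear[OF integral[OF \<tau>] \<Psi>]
          has_integral_const_real[of L "lo \<tau>" "lo \<tau> + \<tau>"]] \<tau>
      by (simp add: o_def)
    then have "norm (\<Psi> (e \<tau>) - \<tau> * L) \<le> 2 * norm Y * Kh * K' * \<tau> * \<tau>"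
    proof (rule has_integral_norm_le_length)
      fix s assume s: "s \<in> {lo \<tau>..lo \<tau> + \<tau>}"
      have "\<Psi> (F s) - L = \<Psi> (F s - A s)"
        unfolding linear_diff[OF bounded_linear.linear[OF \<Psi>]] using rate[of s] by (simp add: \<Psi>_def)
      also have "norm \<dots> \<le> 2 * norm Y * Kh * norm (F s - A s)"
        using \<Psi>_le by simp
      also have "\<dots> \<le> 2 * norm Y * Kh * (K' * \<tau>)"
        using Kh(1) by (intro mult_left_mono F_approx[OF \<tau> s]) simp
      finally show "norm (\<Psi> (F s) - L) \<le> 2 * norm Y * Kh * K' * \<tau>" by simp
    qed (use \<tau> in simp)
    then have linear_part: "\<bar>\<Psi> (e \<tau>) - \<tau> * L\<bar> \<le> 2 * norm Y * Kh * K' * \<tau> * \<tau>"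
      by simp
    have "norm (e \<tau>) \<le> K * \<tau>"
      using \<tau> by (intro has_integral_norm_le_length[OF integral[OF \<tau>]] F_bound) auto
    then have "norm (e \<tau>) * norm (e \<tau>) \<le> (K * \<tau>) * (K * \<tau>)"
      using \<open>0 \<le> K\<close> \<tau> by (intro mult_mono) auto
    then have "norm (e \<tau>) * norm (e \<tau>) * Kh \<le> (K * \<tau>) * (K * \<tau>) * Kh"
      using Kh(1) by (intro mult_right_mono) auto
    then have e_sq: "\<bar>h (e \<tau>) (e \<tau>)\<bar> \<le> Kh * K * K * \<tau> * \<tau>"
      using Kh(2)[of "e \<tau>" "e \<tau>"] by (simp add: mult_ac)
    have "h (Y + \<sigma> *\<^sub>R e \<tau>) (Y + \<sigma> *\<^sub>R e \<tau>)
          = h Y Y + \<sigma> * \<Psi> (e \<tau>) + \<sigma> * \<sigma> * h (e \<tau>) (e \<tau>)"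
      by (simp add: \<Psi>_def bounded_bilinear.add_left[OF h] bounded_bilinear.add_right[OF h]
          bounded_bilinear.scaleR_left[OF h] bounded_bilinear.scaleR_right[OF h] algebra_simps)
    then have "\<Psi> (e \<tau>) = - \<sigma> * h (e \<tau>) (e \<tau>)"
      using vanish[OF \<tau>] \<open>h Y Y = 0\<close> \<sigma> by auto
    then have quadratic_part: "\<bar>\<Psi> (e \<tau>)\<bar> \<le> Kh * K * K * \<tau> * \<tau>"
      using e_sq \<sigma> by auto
    have "\<tau> * \<bar>L\<bar> = \<bar>\<Psi> (e \<tau>) - (\<Psi> (e \<tau>) - \<tau> * L)\<bar>"
      using \<tau> by (simp add: abs_mult)
    also have "\<dots> \<le> \<bar>\<Psi> (e \<tau>)\<bar> + \<bar>\<Psi> (e \<tau>) - \<tau> * L\<bar>"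
      by (rule abs_triangle_ineq4)
    also have "\<dots> \<le> \<tau> * (C * \<tau>)"
      using linear_part quadratic_part by (simp add: C_def algebra_simps)
    finally show "\<bar>L\<bar> \<le> C * \<tau>"
      using \<tau> by simp
  qed
qed

lemma AE_lebesgue_obtain_in_interval:
  fixes a b :: real
  assumes "AE t in lebesgue. P t" and "a < b"
  obtains t where "t \<in> {a..b}" "P t"
proof (rule ccontr)
  assume "\<not> thesis"
  then have "\<forall>t\<in>{a..b}. \<not> P t" using that by blast
  from assms(1) obtain N where N: "{x \<in> space lebesgue. \<not> P x} \<subseteq> N" "emeasure lebesgue N = 0"
    "N \<in> sets lebesgue"
    by (rule AE_E)
  have "negligible N" using N negligible_iff_emeasure0 by blast
  moreover have "{a..b} \<subseteq> N" using N(1) \<open>\<forall>t\<in>{a..b}. \<not> P t\<close> by auto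
  ultimately have "negligible (cbox a b)" using negligible_subset by (metis cbox_interval)
  then have "box a b = {}" by (simp only: negligible_interval)
  with \<open>a < b\<close> show False by (simp add: box_real)
qed

lemma AE_le_imp_le_on_interval:
  fixes f :: "real \<Rightarrow> real"
  assumes ae: "AE t in lebesgue. t \<in> {a..b} \<longrightarrow> f t \<le> c"
    and "a < b" and f: "continuous_on {a..b} f" and t0: "t0 \<in> {a..b}"
  shows "f t0 \<le> c"
proof (rule ccontr)
  assume "\<not> f t0 \<le> c"
  then obtain d where d: "d > 0" "\<And>t. t \<in> {a..b} \<Longrightarrow> dist t t0 < d \<Longrightarrow> dist (f t) (f t0) < f t0 - c"
    using f t0 unfolding continuous_on_iff by (metis diff_gt_0_iff_gt not_le)
  have "max a (t0 - d/2) < min b (t0 + d/2)"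
    using \<open>a < b\<close> t0 d(1) by auto
  then obtain t where t: "t \<in> {max a (t0 - d/2)..min b (t0 + d/2)}" "t \<in> {a..b} \<longrightarrow> f t \<le> c"
    using AE_lebesgue_obtain_in_interval[OF ae] by blast
  then have "dist (f t) (f t0) < f t0 - c"
    using d by (intro d(2)) (auto simp: dist_real_def)
  then show False using t by (auto simp: dist_real_def)
qed

section \<open>Integral equations\<close>

context
  fixes F X :: "real \<Rightarrow> 'a::banach" and a b :: real and X0 :: 'a
  assumes solution: "\<And>t. t \<in> {a..b} \<Longrightarrow> (F has_integral (X t - X0)) {a..t}"
begin

lemma integral_equation_initial:
  assumes "a \<le> b"
  shows "X a = X0"
proof -
  have "(F has_integral (X a - X0)) {a}" using solution[of a] assms by simp
  then have "X a - X0 = 0" using has_integral_unique has_integral_refl(2) by blast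
  then show ?thesis by simp
qed

lemma integral_equation_increment:
  assumes "a \<le> s" "s \<le> t" "t \<le> b"
  shows "(F has_integral (X t - X s)) {s..t}"
proof -
  have "F integrable_on {a..b}" using solution[of b] assms by auto
  then have "F integrable_on {s..t}"
    by (rule integrable_subinterval_real) (use assms in auto)
  then obtain j where j: "(F has_integral j) {s..t}" by blast
  have "(F has_integral (X s - X0) + j) {a..t}"
    using has_integral_combine[OF assms(1,2) solution[of s] j] assms by simp
  then have "X s - X0 + j = X t - X0"
    using solution[of t] assms by (simp add: has_integral_unique)
  then have "j = X t - X s" by (simp add: eq_diff_eq algebra_simps)
  with j show ?thesis by simp
qed

lemma integral_equation_continuous:
  assumes "a \<le> b"
  shows "continuous_on {a..b} X"
proof (rule continuous_on_eq)
  show "continuous_on {a..b} (\<lambda>t. X0 + integral {a..t} F)"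
    using solution[of b] assms
    by (intro continuous_on_add continuous_on_const indefinite_integral_continuous_1) auto
  show "X0 + integral {a..t} F = X t" if "t \<in> {a..b}" for t
    using integral_unique[OF solution[OF that]] by simp
qed

lemma integral_equation_lipschitz:
  assumes "\<And>s. s \<in> {a..b} \<Longrightarrow> norm (F s) \<le> K" and "a \<le> s" "s \<le> t" "t \<le> b"
  shows "norm (X t - X s) \<le> K * (t - s)"
proof (rule has_integral_norm_le_length)
  show "(F has_integral (X t - X s)) {s..s + (t - s)}"
    using integral_equation_increment[OF assms(2-4)] by simp
qed (use assms in auto)

end

section \<open>The Pontryagin coefficients\<close>

definition pcoef_form :: "cmat4 \<Rightarrow> cmat4 \<Rightarrow> cmat4 \<Rightarrow> cmat4 \<Rightarrow> real" where
  "pcoef_form M K A B = Re (\<i> * trace (M ** ctrans A ** K ** B))"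

lemma pcoef_eq_pcoef_form: "pcoef M X K = pcoef_form M K X X"
  by (simp add: pcoef_def pcoef_form_def)

lemma bounded_bilinear_pcoef_form: "bounded_bilinear (pcoef_form M K)"
  unfolding bilinear_conv_bounded_bilinear[symmetric] bilinear_def pcoef_form_def
  by (auto intro!: linearI simp: matrix_add_ldistrib matrix_add_rdistrib scalar_matrix_assoc[symmetric]
      matrix_scalar_ac ctrans_add ctrans_scaleR trace_add trace_scaleR algebra_simps)

definition lie_elem :: "real \<Rightarrow> real \<Rightarrow> real \<Rightarrow> real \<Rightarrow> real \<Rightarrow> real \<Rightarrow> cmat4" where
  "lie_elem a1 a2 a3 c1 c2 c3 =
     csc \<i> (a1 *\<^sub>R Bx + a2 *\<^sub>R By + a3 *\<^sub>R Bz + c1 *\<^sub>R Cx + c2 *\<^sub>R Cy + c3 *\<^sub>R Cz)"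

lemma lie_l_obtain_coordinates:
  assumes "M \<in> lie_l"
  obtains a1 a2 a3 c1 c2 c3 where "M = lie_elem a1 a2 a3 c1 c2 c3"
  using assms unfolding lie_l_def lie_elem_def by blast

lemma lie_elem_zero: "lie_elem 0 0 0 0 0 0 = 0"
  by (simp add: lie_elem_def csc_def vec_eq_iff)

lemma pcoef_at_identity:
  "pcoef (lie_elem a1 a2 a3 c1 c2 c3) (mat 1) Bx = - a1"
  "pcoef (lie_elem a1 a2 a3 c1 c2 c3) (mat 1) By = - a2"
  "pcoef (lie_elem a1 a2 a3 c1 c2 c3) (mat 1) Bz = - a3"
  "pcoef (lie_elem a1 a2 a3 c1 c2 c3) (mat 1) Cz = - c3"
  by (simp_all add: pcoef_def lie_elem_def spin_matrix_simps algebra_simps)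

lemma pcoef_at_swap:
  assumes "Y1 \<in> {Xf \<phi>, - Xf \<phi>}" "Y2 \<in> {Xf \<phi>, - Xf \<phi>}"
  shows
    "pcoef (lie_elem a1 a2 a3 c1 c2 c3) (blockdiag Y1 Y2) Bx = cos (2*\<phi>) * a1 - sin (2*\<phi>) * a2"
    "pcoef (lie_elem a1 a2 a3 c1 c2 c3) (blockdiag Y1 Y2) By = - (sin (2*\<phi>) * a1 + cos (2*\<phi>) * a2)"
    "pcoef (lie_elem a1 a2 a3 c1 c2 c3) (blockdiag Y1 Y2) Bz = a3"
    "pcoef (lie_elem a1 a2 a3 c1 c2 c3) (blockdiag Y1 Y2) Cz = c3"
  unfolding cos_double sin_double power2_eq_square
  using assms by (auto simp: pcoef_def lie_elem_def spin_matrix_simps algebra_simps)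

text \<open>The formal derivative of \<open>pcoef M Y K\<close> along \<open>Y' = G Y\<close>.\<close>
abbreviation pcoef_rate :: "cmat4 \<Rightarrow> cmat4 \<Rightarrow> cmat4 \<Rightarrow> cmat4 \<Rightarrow> real" where
  "pcoef_rate M K G Y \<equiv> pcoef_form M K (G ** Y) Y + pcoef_form M K Y (G ** Y)"

lemma pcoef_rate_at_identity:
  "pcoef_rate (lie_elem 0 0 0 c1 c2 c3) Bx (csc (-\<i>) (Hsys \<omega>0 ux uy uz)) (mat 1) = \<omega>0 * c2"
  "pcoef_rate (lie_elem 0 0 0 c1 c2 c3) By (csc (-\<i>) (Hsys \<omega>0 ux uy uz)) (mat 1) = - (\<omega>0 * c1)"
  by (simp_all add: pcoef_form_def lie_elem_def spin_matrix_simps algebra_simps)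

lemma pcoef_rate_at_swap:
  assumes "Y1 \<in> {Xf \<phi>, - Xf \<phi>}" "Y2 \<in> {Xf \<phi>, - Xf \<phi>}"
  shows
    "pcoef_rate (lie_elem 0 0 0 c1 c2 c3) Bx (csc (-\<i>) (Hsys \<omega>0 ux uy uz)) (blockdiag Y1 Y2)
       = \<omega>0 * (sin (2*\<phi>) * c1 + cos (2*\<phi>) * c2)"
    "pcoef_rate (lie_elem 0 0 0 c1 c2 c3) By (csc (-\<i>) (Hsys \<omega>0 ux uy uz)) (blockdiag Y1 Y2)
       = \<omega>0 * (cos (2*\<phi>) * c1 - sin (2*\<phi>) * c2)"
  unfolding cos_double sin_double power2_eq_square
  using assms by (auto simp: pcoef_form_def lie_elem_def spin_matrix_simps algebra_simps)

lemma pmp_H_le: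
  assumes "vx\<^sup>2 + vy\<^sup>2 + vz\<^sup>2 \<le> \<gamma>\<^sup>2" and "0 \<le> \<gamma>"
  shows "pmp_H \<omega>0 M X vx vy vz
           \<le> \<omega>0 * pcoef M X Cz + \<gamma> * (\<bar>pcoef M X Bx\<bar> + \<bar>pcoef M X By\<bar> + \<bar>pcoef M X Bz\<bar>)"
  using mult_le_abs_bound[OF abs_le_if_sum_squares_le(1)[OF assms], of "pcoef M X Bx"]
    mult_le_abs_bound[OF abs_le_if_sum_squares_le(2)[OF assms], of "pcoef M X By"]
    mult_le_abs_bound[OF abs_le_if_sum_squares_le(3)[OF assms], of "pcoef M X Bz"]
  by (simp add: pmp_H_def algebra_simps)

lemma norm_Hsys_le:
  assumes "\<omega>0 \<ge> 0" "\<bar>x\<bar> \<le> \<gamma>" "\<bar>y\<bar> \<le> \<gamma>" "\<bar>z\<bar> \<le> \<gamma>"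
  shows "norm (Hsys \<omega>0 x y z) \<le> \<omega>0 * norm Cz + \<gamma> * (norm Bx + norm By + norm Bz)"
proof -
  have "norm (Hsys \<omega>0 x y z) \<le> \<omega>0 * norm Cz + \<bar>x\<bar> * norm Bx + \<bar>y\<bar> * norm By + \<bar>z\<bar> * norm Bz"
    unfolding Hsys_def using assms(1) by (smt (verit) norm_scaleR norm_triangle_ineq)
  also have "\<dots> \<le> \<omega>0 * norm Cz + \<gamma> * norm Bx + \<gamma> * norm By + \<gamma> * norm Bz"
    using assms(2-4) by (intro add_mono mult_right_mono) auto
  finally show ?thesis by (simp add: algebra_simps)
qed

section \<open>Extremals reaching a SWAP-equivalent gate\<close>

locale swap_extremal =
  fixes \<omega>0 \<gamma> tf \<phi> :: real and ux uy uz :: "real \<Rightarrow> real" and X :: "real \<Rightarrow> cmat4"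
    and Y1 Y2 :: cmat2 and M :: cmat4
  assumes \<omega>0_pos: "\<omega>0 > 0" and \<gamma>_pos: "\<gamma> > 0" and tf_pos: "tf > 0"
    and admissible: "admissible \<gamma> tf ux uy uz"
    and trajectory: "trajectory \<omega>0 tf ux uy uz X"
    and extremal: "extremal \<omega>0 \<gamma> tf ux uy uz X M"
    and Y1: "Y1 \<in> {Xf \<phi>, - Xf \<phi>}" and Y2: "Y2 \<in> {Xf \<phi>, - Xf \<phi>}"
    and X_tf: "X tf = blockdiag Y1 Y2"
begin

definition G :: "real \<Rightarrow> cmat4" where
  "G s = csc (-\<i>) (Hsys \<omega>0 (ux s) (uy s) (uz s))"

lemma X_integral_equation: "t \<in> {0..tf} \<Longrightarrow> ((\<lambda>s. G s ** X s) has_integral (X t - mat 1)) {0..t}"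
  using trajectory by (simp add: trajectory_def G_def csc_mult_left)

lemma X_0: "X 0 = mat 1"
  using integral_equation_initial[where b = tf, OF X_integral_equation] tf_pos by simp

lemma continuous_on_pcoef: "continuous_on {0..tf} (\<lambda>t. pcoef M (X t) K)"
  unfolding pcoef_eq_pcoef_form
  using integral_equation_continuous[where b = tf, OF X_integral_equation] tf_pos
  by (intro bounded_bilinear.continuous_on[OF bounded_bilinear_pcoef_form]) auto

lemma controls_abs_le:
  assumes "s \<in> {0..tf}"
  shows "\<bar>ux s\<bar> \<le> \<gamma>" "\<bar>uy s\<bar> \<le> \<gamma>" "\<bar>uz s\<bar> \<le> \<gamma>"
  using abs_le_if_sum_squares_le[of "ux s" "uy s" "uz s" \<gamma>] admissible assms \<gamma>_pos
  by (auto simp: admissible_def)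

lemma G_bounded:
  obtains KG where "0 \<le> KG" "\<And>s. s \<in> {0..tf} \<Longrightarrow> norm (G s) \<le> KG"
proof -
  obtain Kc where Kc: "Kc > 0" "\<And>A::cmat4. norm (csc (-\<i>) A) \<le> norm A * Kc"
    using bounded_linear.pos_bounded[OF bounded_linear_csc[of "-\<i>"]] by blast
  define KG where "KG = (\<omega>0 * norm Cz + \<gamma> * (norm Bx + norm By + norm Bz)) * Kc"
  show thesis
  proof
    show "0 \<le> KG"
      unfolding KG_def using Kc(1) \<omega>0_pos \<gamma>_pos by simp
    show "norm (G s) \<le> KG" if "s \<in> {0..tf}" for s
    proof -
      have "norm (G s) \<le> norm (Hsys \<omega>0 (ux s) (uy s) (uz s)) * Kc"
        unfolding G_def by (rule Kc(2))
      also have "\<dots> \<le> KG"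
        unfolding KG_def using Kc(1) \<omega>0_pos controls_abs_le[OF that]
        by (intro mult_right_mono norm_Hsys_le) auto
      finally show ?thesis .
    qed
  qed
qed

lemma X_bounded:
  obtains B where "1 \<le> B" "\<And>s. s \<in> {0..tf} \<Longrightarrow> norm (X s) \<le> B"
proof -
  have "bounded (X ` {0..tf})"
    using integral_equation_continuous[where b = tf, OF X_integral_equation] tf_pos
    by (intro compact_imp_bounded compact_continuous_image) auto
  then obtain B where "\<And>s. s \<in> {0..tf} \<Longrightarrow> norm (X s) \<le> B"
    unfolding bounded_iff by blast
  then show thesis
    using that[of "max 1 B"] by (meson max.cobounded1 max.coboundedI2)
qed

lemma velocity_bound:
  obtains K where "0 \<le> K" "\<And>s. s \<in> {0..tf} \<Longrightarrow> norm (G s ** X s) \<le> K"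
    "\<And>s (Z::cmat4). s \<in> {0..tf} \<Longrightarrow> norm (G s ** Z) \<le> K * norm Z"
proof -
  obtain Km where Km: "Km > 0" "\<And>(A::cmat4) (B::cmat4). norm (A ** B) \<le> norm A * norm B * Km"
    using bounded_bilinear.pos_bounded[OF bounded_bilinear_matrix_mult] by blast
  obtain KG where KG: "0 \<le> KG" "\<And>s. s \<in> {0..tf} \<Longrightarrow> norm (G s) \<le> KG"
    using G_bounded by blast
  obtain B where B: "1 \<le> B" "\<And>s. s \<in> {0..tf} \<Longrightarrow> norm (X s) \<le> B"
    using X_bounded by blast
  have G_Z: "norm (G s ** Z) \<le> Km * KG * norm Z" if "s \<in> {0..tf}" for s and Z :: cmat4
  proof -
    have "norm (G s ** Z) \<le> norm (G s) * norm Z * Km" by (rule Km(2))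
    also have "\<dots> \<le> KG * norm Z * Km"
      using KG(2)[OF that] Km(1) by (intro mult_right_mono) auto
    finally show ?thesis by (simp add: mult_ac)
  qed
  have "0 \<le> Km * KG" using Km(1) KG(1) by simp
  show thesis
  proof
    show "0 \<le> Km * KG * B"
      using \<open>0 \<le> Km * KG\<close> B(1) by simp
    show "norm (G s ** Z) \<le> Km * KG * B * norm Z" if "s \<in> {0..tf}" for s and Z :: cmat4
    proof -
      have "Km * KG \<le> Km * KG * B"
        using mult_left_mono[OF B(1) \<open>0 \<le> Km * KG\<close>] by simp
      then have "Km * KG * norm Z \<le> Km * KG * B * norm Z"
        by (rule mult_right_mono) simp
      then show ?thesis using G_Z[OF that, of Z] by linarith
    qed
    show "norm (G s ** X s) \<le> Km * KG * B" if "s \<in> {0..tf}" for s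
      using G_Z[OF that, of "X s"] mult_left_mono[OF B(2)[OF that] \<open>0 \<le> Km * KG\<close>] by linarith
  qed
qed

lemma pcoef_rate_eq_0_at_start:
  assumes "0 < \<epsilon>" "\<epsilon> \<le> tf" and vanish: "\<And>t. t \<in> {0..<\<epsilon>} \<Longrightarrow> pcoef M (X t) P = 0"
    and rate: "\<And>s. pcoef_rate M P (G s) (mat 1) = L"
  shows "L = 0"
proof -
  obtain K where K: "0 \<le> K" "\<And>s. s \<in> {0..tf} \<Longrightarrow> norm (G s ** X s) \<le> K"
    "\<And>s (Z::cmat4). s \<in> {0..tf} \<Longrightarrow> norm (G s ** Z) \<le> K * norm Z"
    using velocity_bound by blast
  show ?thesis
  proof (rule bilinear_form_rate_eq_0[where h = "pcoef_form M P" and \<sigma> = 1 and lo = "\<lambda>_. 0"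
        and F = "\<lambda>s. G s ** X s" and A = "\<lambda>s. G s ** mat 1" and e = "\<lambda>\<tau>. X \<tau> - mat 1"
        and Y = "mat 1" and K = K and K' = "K * K"])
    show "((\<lambda>s. G s ** X s) has_integral (X \<tau> - mat 1)) {0..0 + \<tau>}" if "0 < \<tau>" "\<tau> < \<epsilon>" for \<tau>
      using X_integral_equation[of \<tau>] that assms(2) by simp
    show "pcoef_form M P (mat 1 + 1 *\<^sub>R (X \<tau> - mat 1)) (mat 1 + 1 *\<^sub>R (X \<tau> - mat 1)) = 0"
      if "0 < \<tau>" "\<tau> < \<epsilon>" for \<tau>
      using vanish[of \<tau>] that by (simp add: pcoef_eq_pcoef_form)
    show "pcoef_form M P (mat 1) (mat 1) = 0"
      using vanish[of 0] assms(1) X_0 by (simp add: pcoef_eq_pcoef_form)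
    show "norm (G s ** X s) \<le> K" if "0 < \<tau>" "\<tau> < \<epsilon>" "s \<in> {0..0 + \<tau>}" for \<tau> s
      using K(2)[of s] that assms(2) by simp
    show "norm (G s ** X s - G s ** mat 1) \<le> K * K * \<tau>"
      if "0 < \<tau>" "\<tau> < \<epsilon>" "s \<in> {0..0 + \<tau>}" for \<tau> s
    proof -
      have s: "s \<in> {0..tf}" using that assms(2) by simp
      have "norm (G s ** X s - G s ** mat 1) \<le> K * norm (X s - X 0)"
        using K(3)[OF s, of "X s - mat 1"] X_0 by (simp add: matrix_diff_ldistrib)
      also have "\<dots> \<le> K * (K * (s - 0))"
        using integral_equation_lipschitz[where b = tf, OF X_integral_equation K(2), of 0 s] s K(1)
        by (intro mult_left_mono) auto
      also have "\<dots> \<le> K * K * \<tau>"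
        unfolding mult.assoc using that K(1) by (intro mult_left_mono) auto
      finally show ?thesis .
    qed
  qed (use assms rate bounded_bilinear_pcoef_form in auto)
qed

lemma pcoef_rate_eq_0_at_end:
  assumes "0 < \<epsilon>" "\<epsilon> \<le> tf" and vanish: "\<And>t. t \<in> {tf-\<epsilon><..tf} \<Longrightarrow> pcoef M (X t) P = 0"
    and rate: "\<And>s. pcoef_rate M P (G s) (X tf) = L"
  shows "L = 0"
proof -
  obtain K where K: "0 \<le> K" "\<And>s. s \<in> {0..tf} \<Longrightarrow> norm (G s ** X s) \<le> K"
    "\<And>s (Z::cmat4). s \<in> {0..tf} \<Longrightarrow> norm (G s ** Z) \<le> K * norm Z"
    using velocity_bound by blast
  show ?thesis
  proof (rule bilinear_form_rate_eq_0[where h = "pcoef_form M P" and \<sigma> = "-1" and lo = "\<lambda>\<tau>. tf - \<tau>"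
        and F = "\<lambda>s. G s ** X s" and A = "\<lambda>s. G s ** X tf" and e = "\<lambda>\<tau>. X tf - X (tf - \<tau>)"
        and Y = "X tf" and K = K and K' = "K * K"])
    show "((\<lambda>s. G s ** X s) has_integral (X tf - X (tf - \<tau>))) {tf - \<tau>..tf - \<tau> + \<tau>}"
      if "0 < \<tau>" "\<tau> < \<epsilon>" for \<tau>
      using integral_equation_increment[where b = tf, OF X_integral_equation, of "tf - \<tau>" tf] that assms(2)
      by simp
    show "pcoef_form M P (X tf + (-1) *\<^sub>R (X tf - X (tf - \<tau>))) (X tf + (-1) *\<^sub>R (X tf - X (tf - \<tau>)))
            = 0"
      if "0 < \<tau>" "\<tau> < \<epsilon>" for \<tau>
      using vanish[of "tf - \<tau>"] that by (simp add: pcoef_eq_pcoef_form)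
    show "pcoef_form M P (X tf) (X tf) = 0"
      using vanish[of tf] assms(1) by (simp add: pcoef_eq_pcoef_form)
    show "norm (G s ** X s) \<le> K" if "0 < \<tau>" "\<tau> < \<epsilon>" "s \<in> {tf - \<tau>..tf - \<tau> + \<tau>}" for \<tau> s
      using K(2)[of s] that assms(2) by simp
    show "norm (G s ** X s - G s ** X tf) \<le> K * K * \<tau>"
      if "0 < \<tau>" "\<tau> < \<epsilon>" "s \<in> {tf - \<tau>..tf - \<tau> + \<tau>}" for \<tau> s
    proof -
      have s: "s \<in> {0..tf}" using that assms(2) by simp
      have "norm (G s ** X s - G s ** X tf) \<le> K * norm (X tf - X s)"
        using K(3)[OF s, of "X s - X tf"] by (simp add: matrix_diff_ldistrib norm_minus_commute)
      also have "\<dots> \<le> K * (K * (tf - s))"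
        using integral_equation_lipschitz[where b = tf, OF X_integral_equation K(2), of s tf] s K(1)
        by (intro mult_left_mono) auto
      also have "\<dots> \<le> K * K * \<tau>"
        unfolding mult.assoc using that K(1) by (intro mult_left_mono) auto
      finally show ?thesis .
    qed
  qed (use assms rate bounded_bilinear_pcoef_form in auto)
qed

lemma hamiltonian_value_at_B_zeros:
  obtains lam where "\<And>t. t \<in> {0..tf} \<Longrightarrow> pcoef M (X t) Bx = 0 \<Longrightarrow> pcoef M (X t) By = 0 \<Longrightarrow>
    pcoef M (X t) Bz = 0 \<Longrightarrow> \<omega>0 * pcoef M (X t) Cz = lam"
proof -
  obtain lam where max: "AE t in lebesgue. t \<in> {0..tf} \<longrightarrow>
      ((\<forall>vx vy vz. vx\<^sup>2 + vy\<^sup>2 + vz\<^sup>2 \<le> \<gamma>\<^sup>2 \<longrightarrow>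
          pmp_H \<omega>0 M (X t) (ux t) (uy t) (uz t) \<ge> pmp_H \<omega>0 M (X t) vx vy vz) \<and>
       pmp_H \<omega>0 M (X t) (ux t) (uy t) (uz t) = lam)"
    using extremal unfolding extremal_def by blast
  define \<beta> where "\<beta> t = \<gamma> * (\<bar>pcoef M (X t) Bx\<bar> + \<bar>pcoef M (X t) By\<bar> + \<bar>pcoef M (X t) Bz\<bar>)" for t
  have bounds: "\<omega>0 * pcoef M (X t) Cz \<le> lam \<and> - (\<omega>0 * pcoef M (X t) Cz + \<beta> t) \<le> - lam"
    if t: "t \<in> {0..tf}"
      and "\<forall>vx vy vz. vx\<^sup>2 + vy\<^sup>2 + vz\<^sup>2 \<le> \<gamma>\<^sup>2 \<longrightarrow>
             pmp_H \<omega>0 M (X t) vx vy vz \<le> pmp_H \<omega>0 M (X t) (ux t) (uy t) (uz t)"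
      and lam: "pmp_H \<omega>0 M (X t) (ux t) (uy t) (uz t) = lam" for t
  proof
    have "pmp_H \<omega>0 M (X t) 0 0 0 \<le> lam" using that(2) lam by auto
    then show "\<omega>0 * pcoef M (X t) Cz \<le> lam" by (simp add: pmp_H_def)
    have "(ux t)\<^sup>2 + (uy t)\<^sup>2 + (uz t)\<^sup>2 \<le> \<gamma>\<^sup>2" using admissible t by (simp add: admissible_def)
    then show "- (\<omega>0 * pcoef M (X t) Cz + \<beta> t) \<le> - lam"
      using pmp_H_le[of "ux t" "uy t" "uz t" \<gamma> \<omega>0 M "X t"] \<gamma>_pos lam by (simp add: \<beta>_def)
  qed
  have ae_lower: "AE t in lebesgue. t \<in> {0..tf} \<longrightarrow> \<omega>0 * pcoef M (X t) Cz \<le> lam"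
    using max by eventually_elim (use bounds in blast)
  have ae_upper: "AE t in lebesgue. t \<in> {0..tf} \<longrightarrow> - (\<omega>0 * pcoef M (X t) Cz + \<beta> t) \<le> - lam"
    using max by eventually_elim (use bounds in blast)
  have cont_lower: "continuous_on {0..tf} (\<lambda>t. \<omega>0 * pcoef M (X t) Cz)"
    by (intro continuous_intros continuous_on_pcoef)
  have cont_upper: "continuous_on {0..tf} (\<lambda>t. - (\<omega>0 * pcoef M (X t) Cz + \<beta> t))"
    unfolding \<beta>_def by (intro continuous_intros continuous_on_pcoef)
  show thesis
  proof
    fix t assume t: "t \<in> {0..tf}"
      and "pcoef M (X t) Bx = 0" "pcoef M (X t) By = 0" "pcoef M (X t) Bz = 0"
    then have "\<beta> t = 0" by (simp add: \<beta>_def)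
    then show "\<omega>0 * pcoef M (X t) Cz = lam"
      using AE_le_imp_le_on_interval[OF ae_lower tf_pos cont_lower t]
        AE_le_imp_le_on_interval[OF ae_upper tf_pos cont_upper t] by simp
  qed
qed

lemma c3_eq_0_if_no_B_part:
  assumes "M = lie_elem 0 0 0 c1 c2 c3"
  shows "c3 = 0"
proof -
  obtain lam where lam: "\<And>t. t \<in> {0..tf} \<Longrightarrow> pcoef M (X t) Bx = 0 \<Longrightarrow> pcoef M (X t) By = 0 \<Longrightarrow>
      pcoef M (X t) Bz = 0 \<Longrightarrow> \<omega>0 * pcoef M (X t) Cz = lam"
    using hamiltonian_value_at_B_zeros by blast
  have "\<omega>0 * (- c3) = lam"
    using lam[of 0] tf_pos by (simp add: X_0 assms pcoef_at_identity)
  moreover have "\<omega>0 * c3 = lam"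
    using lam[of tf] tf_pos by (simp add: X_tf assms pcoef_at_swap[OF Y1 Y2])
  ultimately show "c3 = 0" using \<omega>0_pos by simp
qed

lemma M_coordinates:
  obtains a1 a2 a3 c1 c2 c3 where "M = lie_elem a1 a2 a3 c1 c2 c3"
  using extremal lie_l_obtain_coordinates unfolding extremal_def by blast

lemma M_nonzero: "M \<noteq> 0"
  using extremal unfolding extremal_def by blast

lemma no_singular_arc_at_start:
  "\<not> (\<exists>\<epsilon>>0. \<epsilon> \<le> tf \<and> (\<forall>t\<in>{0..<\<epsilon>}.
       pcoef M (X t) Bx = 0 \<and> pcoef M (X t) By = 0 \<and> pcoef M (X t) Bz = 0))"
proof
  assume "\<exists>\<epsilon>>0. \<epsilon> \<le> tf \<and> (\<forall>t\<in>{0..<\<epsilon>}.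
       pcoef M (X t) Bx = 0 \<and> pcoef M (X t) By = 0 \<and> pcoef M (X t) Bz = 0)"
  then obtain \<epsilon> where \<epsilon>: "0 < \<epsilon>" "\<epsilon> \<le> tf" and singular: "\<And>t. t \<in> {0..<\<epsilon>} \<Longrightarrow>
      pcoef M (X t) Bx = 0 \<and> pcoef M (X t) By = 0 \<and> pcoef M (X t) Bz = 0"
    by blast
  obtain a1 a2 a3 c1 c2 c3 where M: "M = lie_elem a1 a2 a3 c1 c2 c3"
    using M_coordinates by blast
  have "a1 = 0" "a2 = 0" "a3 = 0"
    using singular[of 0] \<epsilon> by (simp_all add: M X_0 pcoef_at_identity)
  then have M0: "M = lie_elem 0 0 0 c1 c2 c3" using M by simp
  have "\<omega>0 * c2 = 0"
    by (rule pcoef_rate_eq_0_at_start[OF \<epsilon>, of Bx]) (use singular in \<open>simp_all add: M0 G_def pcoef_rate_at_identity del: matrix_mul_rid\<close>)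
  moreover have "- (\<omega>0 * c1) = 0"
    by (rule pcoef_rate_eq_0_at_start[OF \<epsilon>, of By]) (use singular in \<open>simp_all add: M0 G_def pcoef_rate_at_identity del: matrix_mul_rid\<close>)
  ultimately have "M = lie_elem 0 0 0 0 0 0"
    using M0 c3_eq_0_if_no_B_part[OF M0] \<omega>0_pos by simp
  then show False using M_nonzero lie_elem_zero by simp
qed

lemma no_singular_arc_at_end:
  "\<not> (\<exists>\<epsilon>>0. \<epsilon> \<le> tf \<and> (\<forall>t\<in>{tf-\<epsilon><..tf}.
       pcoef M (X t) Bx = 0 \<and> pcoef M (X t) By = 0 \<and> pcoef M (X t) Bz = 0))"
proof
  assume "\<exists>\<epsilon>>0. \<epsilon> \<le> tf \<and> (\<forall>t\<in>{tf-\<epsilon><..tf}.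
       pcoef M (X t) Bx = 0 \<and> pcoef M (X t) By = 0 \<and> pcoef M (X t) Bz = 0)"
  then obtain \<epsilon> where \<epsilon>: "0 < \<epsilon>" "\<epsilon> \<le> tf" and singular: "\<And>t. t \<in> {tf-\<epsilon><..tf} \<Longrightarrow>
      pcoef M (X t) Bx = 0 \<and> pcoef M (X t) By = 0 \<and> pcoef M (X t) Bz = 0"
    by blast
  obtain a1 a2 a3 c1 c2 c3 where M: "M = lie_elem a1 a2 a3 c1 c2 c3"
    using M_coordinates by blast
  have rot: "(cos (2*\<phi>))\<^sup>2 + (sin (2*\<phi>))\<^sup>2 = 1" by simp
  have "cos (2*\<phi>) * a1 - sin (2*\<phi>) * a2 = 0" "sin (2*\<phi>) * a1 + cos (2*\<phi>) * a2 = 0" "a3 = 0"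
    using singular[of tf] \<epsilon> by (simp_all add: M X_tf pcoef_at_swap[OF Y1 Y2])
  then have "a1 = 0" "a2 = 0" "a3 = 0" using rotation_eq_0_imp[OF rot] by blast+
  then have M0: "M = lie_elem 0 0 0 c1 c2 c3" using M by simp
  have "\<omega>0 * (sin (2*\<phi>) * c1 + cos (2*\<phi>) * c2) = 0"
    by (rule pcoef_rate_eq_0_at_end[OF \<epsilon>, of Bx])
      (use singular in \<open>simp_all add: M0 G_def X_tf pcoef_rate_at_swap[OF Y1 Y2]\<close>)
  moreover have "\<omega>0 * (cos (2*\<phi>) * c1 - sin (2*\<phi>) * c2) = 0"
    by (rule pcoef_rate_eq_0_at_end[OF \<epsilon>, of By])
      (use singular in \<open>simp_all add: M0 G_def X_tf pcoef_rate_at_swap[OF Y1 Y2]\<close>)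
  ultimately have "c1 = 0" "c2 = 0"
    using rotation_eq_0_imp[OF rot, of c1 c2] \<omega>0_pos by simp_all
  then have "M = lie_elem 0 0 0 0 0 0"
    using M0 c3_eq_0_if_no_B_part[OF M0] by simp
  then show False using M_nonzero lie_elem_zero by simp
qed

end

theorem proposition4:
  fixes \<omega>0 \<gamma> tf \<phi> :: real
    and ux uy uz :: "real \<Rightarrow> real"
    and X :: "real \<Rightarrow> cmat4"
    and Y1 Y2 :: cmat2
    and M :: cmat4
  assumes "\<omega>0 > 0" and "\<gamma> > 0" and "tf > 0"
    and "admissible \<gamma> tf ux uy uz"
    and "trajectory \<omega>0 tf ux uy uz X"
    and "extremal \<omega>0 \<gamma> tf ux uy uz X M"
    and "Y1 \<in> {Xf \<phi>, - Xf \<phi>}" and "Y2 \<in> {Xf \<phi>, - Xf \<phi>}"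
    and "X tf = blockdiag Y1 Y2"
  shows "\<not> (\<exists>\<epsilon>>0. \<epsilon> \<le> tf \<and> (\<forall>t\<in>{0..<\<epsilon>}.
                 pcoef M (X t) Bx = 0 \<and> pcoef M (X t) By = 0 \<and> pcoef M (X t) Bz = 0)) \<and>
           \<not> (\<exists>\<epsilon>>0. \<epsilon> \<le> tf \<and> (\<forall>t\<in>{tf-\<epsilon><..tf}.
                 pcoef M (X t) Bx = 0 \<and> pcoef M (X t) By = 0 \<and> pcoef M (X t) Bz = 0))"
proof -
  interpret swap_extremal \<omega>0 \<gamma> tf \<phi> ux uy uz X Y1 Y2 M
    using assms by unfold_locales
  show ?thesis
    using no_singular_arc_at_start no_singular_arc_at_end by blast
qed

end
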